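(* Let $\mathcal X$ be finite with $N=|\mathcal X|\ge2$, $c\in(0,1/N]$ and $0\le\varepsilon\le-\log c$. Then $$\Gamma_{\max}(\varepsilon,c)\le(1-Nc)e^\varepsilon+1\quad\text{and}\quad\Gamma_{\min}(\varepsilon,c)\ge\big((1-Nc)e^\varepsilon+1\big)^{-1}.$$
   Context: A kernel $K$ is a row-stochastic matrix with entries $K_{Y|X=x}(y)$, $(K\circ P_X)(y)=\sum_xK_{Y|X=x}(y)P_X(x)$. PML: $\ell_{K\times P_X}(X\to y)=\log\frac{\max_x K_{Y|X=x}(y)}{(K\circ P_X)(y)}$ for full-support $P_X$ and $(K\circ P_X)(y)>0$. $\mathcal Q_{\mathcal X}(c)=\{P_X:\min_xP_X(x)\ge c\}$; $C(K,\mathcal P)=\sup_{P_X\in\mathcal P}\sup_{y:(K\circ P_X)(y)>0}\ell_{K\times P_X}(X\to y)$; $\mathcal M(\varepsilon,c)$ is the set of kernels from $\mathcal X$ to a finite output set with $C(K,\mathcal Q_{\mathcal X}(c))\le\varepsilon$. Define $\Gamma_{\max}(\varepsilon,c)=\sup_{P_X,Q_X\in\mathcal Q_{\mathcal X}(c)}\sup_{K\in\mathcal M(\varepsilon,c)}\sup_{y}\frac{(K\circ P_X)(y)}{(K\circ Q_X)(y)}$ and $\Gamma_{\min}(\varepsilon,c)=\inf_{P_X,Q_X\in\mathcal Q_{\mathcal X}(c)}\inf_{K\in\mathcal M(\varepsilon,c)}\inf_{y}\frac{(K\circ P_X)(y)}{(K\circ Q_X)(y)}$, where $y$ ranges over outputs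 with $K_{Y|X=x}(y)>0$ for some $x$. *)

theory Defs
  imports "HOL-Analysis.Analysis"
begin

text \<open>Input alphabet: a finite type 'x. Output alphabet: a finite type 'y.
  A kernel is K :: 'x => 'y => real with K x y = K_{Y|X=x}(y).\<close>

definition is_kernel :: "('x::finite \<Rightarrow> 'y::finite \<Rightarrow> real) \<Rightarrow> bool" where
  "is_kernel K \<longleftrightarrow> (\<forall>x y. 0 \<le> K x y) \<and> (\<forall>x. (\<Sum>y\<in>UNIV. K x y) = 1)"

definition is_distribution :: "('x::finite \<Rightarrow> real) \<Rightarrow> bool" where
  "is_distribution P \<longleftrightarrow> (\<forall>x. 0 \<le> P x) \<and> (\<Sum>x\<in>UNIV. P x) = 1"

definition push :: "('x::finite \<Rightarrow> 'y \<Rightarrow> real) \<Rightarrow> ('x \<Rightarrow> real) \<Rightarrow> 'y \<Rightarrow> real" where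
  "push K P y = (\<Sum>x\<in>UNIV. K x y * P x)"

definition PML :: "('x::finite \<Rightarrow> 'y \<Rightarrow> real) \<Rightarrow> ('x \<Rightarrow> real) \<Rightarrow> 'y \<Rightarrow> real" where
  "PML K P y = ln (Max (range (\<lambda>x. K x y)) / push K P y)"

definition Qset :: "real \<Rightarrow> ('x::finite \<Rightarrow> real) set" where
  "Qset c = {P. is_distribution P \<and> (\<forall>x. c \<le> P x)}"

definition Cap :: "('x::finite \<Rightarrow> 'y::finite \<Rightarrow> real) \<Rightarrow> ('x \<Rightarrow> real) set \<Rightarrow> ereal" where
  "Cap K Ps = (SUP P\<in>Ps. SUP y\<in>{y. push K P y > 0}. ereal (PML K P y))"

definition Mset :: "real \<Rightarrow> real \<Rightarrow> ('x::finite \<Rightarrow> 'y::finite \<Rightarrow> real) set" where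
  "Mset eps c = {K. is_kernel K \<and> Cap K (Qset c) \<le> ereal eps}"

text \<open>Gamma_max / Gamma_min for kernels with output alphabet the type 'y
  (the paper's supremum over all finite output sets is recovered by
  quantifying the theorem over all finite types 'y).\<close>
definition Gamma_max :: "'x::finite itself \<Rightarrow> 'y::finite itself \<Rightarrow> real \<Rightarrow> real \<Rightarrow> ereal" where
  "Gamma_max _ _ eps c =
     (SUP (P, Q, K, y) \<in> {(P, Q, K, y). P \<in> (Qset c :: ('x \<Rightarrow> real) set) \<and> Q \<in> Qset c
          \<and> K \<in> (Mset eps c :: ('x \<Rightarrow> 'y \<Rightarrow> real) set) \<and> (\<exists>x. K x y > 0)}.
        ereal (push K P y / push K Q y))"

definition Gamma_min :: "'x::finite itself \<Rightarrow> 'y::finite itself \<Rightarrow> real \<Rightarrow> real \<Rightarrow> ereal" where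
  "Gamma_min _ _ eps c =
     (INF (P, Q, K, y) \<in> {(P, Q, K, y). P \<in> (Qset c :: ('x \<Rightarrow> real) set) \<and> Q \<in> Qset c
          \<and> K \<in> (Mset eps c :: ('x \<Rightarrow> 'y \<Rightarrow> real) set) \<and> (\<exists>x. K x y > 0)}.
        ereal (push K P y / push K Q y))"

end

theory Submission
  imports Defs
begin

text \<open>For \<open>R \<in> Qset c\<close> the excess \<open>R - c\<close> is a nonnegative weight of total mass \<open>1 - N c\<close>,
  so \<open>push K R y\<close> lies between \<open>c S + (1 - N c) min\<^sub>x K x y\<close> and \<open>c S + (1 - N c) max\<^sub>x K x y\<close>,
  where \<open>S = \<Sum>\<^sub>x K x y\<close>. The lower bound \<open>p\<^sub>0\<close> is attained by the vertex of \<open>Qset c\<close> placing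
  the excess on a minimiser of \<open>K \<cdot> y\<close>, so the leakage constraint at that vertex gives
  \<open>max\<^sub>x K x y \<le> e\<^sup>\<epsilon> p\<^sub>0\<close>. Hence every ratio of outputs is at most
  \<open>(p\<^sub>0 + (1 - N c) max\<^sub>x K x y) / p\<^sub>0 \<le> (1 - N c) e\<^sup>\<epsilon> + 1\<close>, and \<open>\<Gamma>\<^sub>m\<^sub>i\<^sub>n\<close> follows by
  swapping the two distributions.\<close>

lemma sum_weighted_le_Max:
  fixes a w :: "'x::finite \<Rightarrow> real"
  assumes "\<And>x. 0 \<le> w x"
  shows "(\<Sum>x\<in>UNIV. a x * w x) \<le> (\<Sum>x\<in>UNIV. w x) * Max (range a)"
proof -
  have "(\<Sum>x\<in>UNIV. a x * w x) \<le> (\<Sum>x\<in>UNIV. Max (range a) * w x)"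
    by (rule sum_mono) (simp add: assms mult_right_mono)
  also have "\<dots> = (\<Sum>x\<in>UNIV. w x) * Max (range a)"
    by (subst sum_distrib_right) (simp add: mult.commute)
  finally show ?thesis .
qed

lemma sum_weighted_ge_Min:
  fixes a w :: "'x::finite \<Rightarrow> real"
  assumes "\<And>x. 0 \<le> w x"
  shows "(\<Sum>x\<in>UNIV. w x) * Min (range a) \<le> (\<Sum>x\<in>UNIV. a x * w x)"
proof -
  have "(\<Sum>x\<in>UNIV. w x) * Min (range a) = (\<Sum>x\<in>UNIV. Min (range a) * w x)"
    by (subst sum_distrib_right) (simp add: mult.commute)
  also have "\<dots> \<le> (\<Sum>x\<in>UNIV. a x * w x)"
    by (rule sum_mono) (simp add: assms mult_right_mono)
  finally show ?thesis .
qed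

lemma push_eq_offset:
  "push K R y = c * (\<Sum>x\<in>UNIV. K x y) + (\<Sum>x\<in>UNIV. K x y * (R x - c))"
  unfolding push_def
  by (simp add: algebra_simps sum_distrib_left sum_subtractf)

lemma sum_excess_distribution:
  fixes R :: "'x::finite \<Rightarrow> real"
  assumes "is_distribution R"
  shows "(\<Sum>x\<in>UNIV. R x - c) = 1 - real CARD('x) * c"
  using assms by (simp add: is_distribution_def sum_subtractf)

lemma push_Qset_bounds:
  fixes K :: "'x::finite \<Rightarrow> 'y \<Rightarrow> real"
  assumes "R \<in> Qset c"
  shows "c * (\<Sum>x\<in>UNIV. K x y) + (1 - real CARD('x) * c) * Min (range (\<lambda>x. K x y)) \<le> push K R y"
    and "push K R y \<le> c * (\<Sum>x\<in>UNIV. K x y) + (1 - real CARD('x) * c) * Max (range (\<lambda>x. K x y))"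
proof -
  from assms have excess_nonneg: "\<And>x. 0 \<le> R x - c" and mass: "(\<Sum>x\<in>UNIV. R x - c) = 1 - real CARD('x) * c"
    by (auto simp: Qset_def sum_excess_distribution)
  show "c * (\<Sum>x\<in>UNIV. K x y) + (1 - real CARD('x) * c) * Min (range (\<lambda>x. K x y)) \<le> push K R y"
    using sum_weighted_ge_Min[where a = "\<lambda>x. K x y" and w = "\<lambda>x. R x - c", OF excess_nonneg]
    by (simp add: push_eq_offset[of K R y c] mass)
  show "push K R y \<le> c * (\<Sum>x\<in>UNIV. K x y) + (1 - real CARD('x) * c) * Max (range (\<lambda>x. K x y))"
    using sum_weighted_le_Max[where a = "\<lambda>x. K x y" and w = "\<lambda>x. R x - c", OF excess_nonneg]
    by (simp add: push_eq_offset[of K R y c] mass)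
qed

definition Qset_vertex :: "real \<Rightarrow> 'x::finite \<Rightarrow> 'x \<Rightarrow> real" where
  "Qset_vertex c x\<^sub>0 x = c + (if x = x\<^sub>0 then 1 - real CARD('x) * c else 0)"

lemma Qset_vertex_in_Qset:
  fixes x\<^sub>0 :: "'x::finite"
  assumes "0 \<le> c" and "c \<le> 1 / real CARD('x)"
  shows "Qset_vertex c x\<^sub>0 \<in> Qset c"
proof -
  have "real CARD('x) * c \<le> 1"
    using assms(2) by (simp add: field_simps)
  then show ?thesis
    using assms(1) by (simp add: Qset_def is_distribution_def Qset_vertex_def sum.distrib)
qed

lemma push_Qset_vertex:
  fixes K :: "'x::finite \<Rightarrow> 'y \<Rightarrow> real"
  shows "push K (Qset_vertex c x\<^sub>0) y = c * (\<Sum>x\<in>UNIV. K x y) + (1 - real CARD('x) * c) * K x\<^sub>0 y"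
proof -
  have "(\<Sum>x\<in>UNIV. K x y * (Qset_vertex c x\<^sub>0 x - c))
      = (\<Sum>x\<in>UNIV. if x = x\<^sub>0 then K x y * (1 - real CARD('x) * c) else 0)"
    by (rule sum.cong) (auto simp: Qset_vertex_def)
  then show ?thesis
    by (simp add: push_eq_offset[of K _ y c] mult.commute)
qed

lemma Mset_nonneg:
  assumes "K \<in> Mset eps c"
  shows "0 \<le> K x y"
  using assms by (simp add: Mset_def is_kernel_def)

lemma push_pos:
  fixes K :: "'x::finite \<Rightarrow> 'y \<Rightarrow> real"
  assumes "\<And>x. 0 \<le> K x y" and "0 < c" and "R \<in> Qset c" and "0 < K x\<^sub>1 y"
  shows "0 < push K R y"
proof -
  have R_pos: "\<And>x. 0 < R x"
    using assms(2,3) by (auto simp: Qset_def intro: less_le_trans)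
  have "0 < K x\<^sub>1 y * c"
    using assms(2,4) by simp
  also have "\<dots> \<le> K x\<^sub>1 y * R x\<^sub>1"
    using assms(3,4) by (simp add: Qset_def)
  also have "\<dots> \<le> push K R y"
    unfolding push_def
    by (rule member_le_sum) (simp_all add: assms(1) R_pos less_imp_le)
  finally show ?thesis .
qed

lemma Mset_Max_le_exp_push:
  assumes "K \<in> Mset eps c" and "P \<in> Qset c" and "0 < push K P y"
  shows "Max (range (\<lambda>x. K x y)) \<le> exp eps * push K P y"
proof (cases "0 < Max (range (\<lambda>x. K x y))")
  case True
  have "ereal (PML K P y) \<le> Cap K (Qset c)"
    unfolding Cap_def by (rule SUP_upper2[OF assms(2)], rule SUP_upper) (use assms(3) in auto)
  also have "\<dots> \<le> ereal eps"
    using assms(1) by (simp add: Mset_def)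
  finally have "ln (Max (range (\<lambda>x. K x y)) / push K P y) \<le> eps"
    by (simp add: PML_def)
  then have "Max (range (\<lambda>x. K x y)) / push K P y \<le> exp eps"
    using True assms(3) by (metis divide_pos_pos exp_le_cancel_iff exp_ln)
  then show ?thesis
    using assms(3) by (simp add: field_simps)
next
  case False
  then show ?thesis
    using assms(3) by (simp add: not_less order.trans[OF _ mult_nonneg_nonneg])
qed

lemma push_ratio_le:
  fixes K :: "'x::finite \<Rightarrow> 'y::finite \<Rightarrow> real"
  assumes c_pos: "0 < c" and c_le: "c \<le> 1 / real CARD('x)"
    and P: "P \<in> Qset c" and Q: "Q \<in> Qset c" and K: "K \<in> Mset eps c"
    and y_reached: "0 < K x\<^sub>1 y"
  shows "push K P y / push K Q y \<le> (1 - real CARD('x) * c) * exp eps + 1"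
proof -
  define b where "b = 1 - real CARD('x) * c"
  define kmax where "kmax = Max (range (\<lambda>x. K x y))"
  have b_nonneg: "0 \<le> b"
    using c_le by (simp add: b_def field_simps)
  have "Min (range (\<lambda>x. K x y)) \<in> range (\<lambda>x. K x y)"
    by (rule Min_in) auto
  then obtain x\<^sub>0 where x\<^sub>0: "K x\<^sub>0 y = Min (range (\<lambda>x. K x y))"
    by (metis rangeE)
  define p\<^sub>0 where "p\<^sub>0 = push K (Qset_vertex c x\<^sub>0) y"
  have vertex: "Qset_vertex c x\<^sub>0 \<in> Qset c"
    using c_pos c_le by (simp add: Qset_vertex_in_Qset)
  have p\<^sub>0_pos: "0 < p\<^sub>0"
    unfolding p\<^sub>0_def using push_pos[where K = K and y = y, OF Mset_nonneg[OF K] c_pos vertex y_reached] .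
  have kmax_le: "kmax \<le> exp eps * p\<^sub>0"
    unfolding kmax_def p\<^sub>0_def
    using Mset_Max_le_exp_push[OF K vertex p\<^sub>0_pos[unfolded p\<^sub>0_def]] .
  have Q_ge: "p\<^sub>0 \<le> push K Q y"
    using push_Qset_bounds(1)[OF Q, of K y] x\<^sub>0 by (simp add: p\<^sub>0_def push_Qset_vertex)
  have "push K P y \<le> c * (\<Sum>x\<in>UNIV. K x y) + b * kmax"
    using push_Qset_bounds(2)[OF P, of K y] by (simp add: b_def kmax_def)
  also have "\<dots> \<le> p\<^sub>0 + b * kmax"
    using b_nonneg Mset_nonneg[OF K, of x\<^sub>0 y] by (simp add: p\<^sub>0_def push_Qset_vertex b_def)
  finally have P_le: "push K P y \<le> p\<^sub>0 + b * kmax" .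
  have P_nonneg: "0 \<le> push K P y"
    using push_pos[where K = K and y = y, OF Mset_nonneg[OF K] c_pos P y_reached] by simp
  have "push K P y / push K Q y \<le> (p\<^sub>0 + b * kmax) / p\<^sub>0"
    by (rule frac_le) (use P_nonneg P_le p\<^sub>0_pos Q_ge in auto)
  also have "\<dots> = 1 + b * (kmax / p\<^sub>0)"
    using p\<^sub>0_pos by (simp add: field_simps)
  also have "\<dots> \<le> 1 + b * exp eps"
    using kmax_le p\<^sub>0_pos b_nonneg by (simp add: mult_left_mono pos_divide_le_eq mult.assoc)
  finally show ?thesis
    by (simp add: b_def)
qed

theorem proposition2:
  fixes eps c :: real
  assumes "CARD('x::finite) \<ge> 2"
    and "0 < c" and "c \<le> 1 / real CARD('x)"
    and "0 \<le> eps" and "eps \<le> - ln c"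
  shows "Gamma_max TYPE('x) TYPE('y::finite) eps c
           \<le> ereal ((1 - real CARD('x) * c) * exp eps + 1)
       \<and> Gamma_min TYPE('x) TYPE('y) eps c
           \<ge> ereal (1 / ((1 - real CARD('x) * c) * exp eps + 1))"
proof
  let ?B = "(1 - real CARD('x) * c) * exp eps + 1"
  note ratio = push_ratio_le[OF assms(2,3)]
  show "Gamma_max TYPE('x) TYPE('y) eps c \<le> ereal ?B"
    unfolding Gamma_max_def by (rule SUP_least) (auto dest: ratio)
  show "Gamma_min TYPE('x) TYPE('y) eps c \<ge> ereal (1 / ?B)"
    unfolding Gamma_min_def
  proof (rule INF_greatest, clarsimp)
    fix P Q :: "'x \<Rightarrow> real" and K :: "'x \<Rightarrow> 'y \<Rightarrow> real" and y x
    assume P: "P \<in> Qset c" and Q: "Q \<in> Qset c" and K: "K \<in> Mset eps c" and "0 < K x y"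
    then have "0 < push K Q y / push K P y"
      using push_pos[where K = K and y = y, OF Mset_nonneg[OF K] assms(2)] by auto
    then have "inverse ?B \<le> inverse (push K Q y / push K P y)"
      using le_imp_inverse_le ratio[OF Q P K \<open>0 < K x y\<close>] by blast
    then show "1 / ?B \<le> push K P y / push K Q y"
      by (simp add: inverse_eq_divide)
  qed
qed

end
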